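(* Let $p = 2^n$ and let $f, g$ be univariate polynomials over a ring, each of degree $p-1$. Consider computing (part of) the product $f g$ by the clipped Karatsuba method described in the context, recursing down to single coefficients. Let $\ell$ be a natural number with $2^\ell < p$. If only the top $1/2^\ell$ fraction of the coefficients of $fg$ is required (equivalently, if only the bottom $1/2^\ell$ fraction is required), then the number of coefficient multiplications required is at most $K(p)/3^{\ell-1}$, where $K(p) = p^{\log_2 3}$ is the number of coefficient multiplications used by full (unclipped) Karatsuba multiplication of two polynomials with $p$ coefficients.
   Context: Karatsuba multiplication: for $f, g$ with $p$ coefficients ($p$ even), write $f = f_h x^{p/2} + f_l$, $g = g_h x^{p/2} + g_l$ with $f_h,f_l,g_h,g_l$ having $p/2$ coefficients, and put $f_m = f_h + f_l$, $g_m = g_h + g_l$. Then $fg = z_h x^p + z_m x^{p/2} + z_l$ with $z_h = f_h g_h$, $z_l = f_l g_l$, $z_m = f_m g_m - f_h g_h - f_l g_l$; the three products $f_h g_h$, $f_m g_m$, $f_l g_l$ are computed recursively, and a product of two one-coefficient polynomials costs one coefficient multiplication. Thus $K(1)=1$, $K(p) = 3K(p/2)$, so $K(p)=p^{\log_2 3}=3^n$. Clipped Karatsuba: when only a specified range of coefficients of $fg$ is required, only those of the three sub-products $f_hg_h$, $f_mg_m$, $f_lg_l$ (and only those of their coefficients) that are needed to form the required coefficients of $fg$ are computed, each again by clipped Karatsuba recursively; sub-products that are not needed are not computed at all. *)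

theory Defs
  imports Complex_Main
begin

text \<open>Clipped Karatsuba cost. ck n S is the number of coefficient multiplications
performed by clipped Karatsuba when multiplying two polynomials with 2^n coefficients
each and only the coefficients of the product with index in S are required
(indices of the product range over 0 .. 2^(n+1)-2; indices outside are ignored).
For n = Suc m: the halves have h = 2^m coefficients, each sub-product has
coefficient indices 0 .. 2h-2. Coefficient k of fg is
zh[k-2h] + zm[k-h] + zl[k], with zm = fm gm - fh gh - fl gl.\<close>

fun ck :: "nat \<Rightarrow> nat set \<Rightarrow> nat" where
  "ck 0 S = (if 0 \<in> S then 1 else 0)"
| "ck (Suc m) S =
    (let h = (2::nat) ^ m;
         R = {..< 2 * h - 1};
         Sm = {j \<in> R. j + h \<in> S};
         Sh = {j \<in> R. j + 2 * h \<in> S} \<union> Sm;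
         Sl = {j \<in> R. j \<in> S} \<union> Sm
     in ck m Sh + ck m Sm + ck m Sl)"

fun K :: "nat \<Rightarrow> nat" where
  "K 0 = 1"
| "K (Suc m) = 3 * K m"

end

theory Submission
  imports Defs
begin

text \<open>If only coefficients in the top (bottom) quarter of the product are required, only
  the sub-product \<open>z\<^sub>h\<close> (\<open>z\<^sub>l\<close>) contributes, and of it only the top (bottom) half.
  So each halving of the required fraction peels off one recursion level that keeps a single
  branch: clipping a product of polynomials with \<open>2 ^ (m + d)\<close> coefficients to its top or
  bottom \<open>2 ^ m\<close> coefficients costs at most \<open>K m = 3 ^ m\<close> multiplications.\<close>

lemma K_eq_power: "K n = 3 ^ n"
  by (induction n) auto

lemma ck_empty [simp]: "ck n {} = 0"
  by (induction n) (auto simp: Let_def)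

lemma ck_mono: "A \<subseteq> B \<Longrightarrow> ck n A \<le> ck n B"
proof (induction n arbitrary: A B)
  case 0
  then show ?case by auto
next
  case (Suc m)
  show ?case unfolding ck.simps Let_def
    by (intro add_mono Suc.IH) (use Suc.prems in auto)
qed

lemma ck_le_K: "ck n S \<le> K n"
proof (induction n arbitrary: S)
  case 0
  then show ?case by simp
next
  case (Suc m)
  have "ck (Suc m) S \<le> K m + K m + K m"
    unfolding ck.simps Let_def by (intro add_mono Suc.IH)
  then show ?case by simp
qed

lemma ck_Suc_le_low:
  assumes "S \<subseteq> {..< 2 ^ m}"
  shows "ck (Suc m) S \<le> ck m S"
proof -
  let ?R = "{..< 2 * 2 ^ m - 1} :: nat set"
  have mid: "{j \<in> ?R. j + 2 ^ m \<in> S} = {}" and high: "{j \<in> ?R. j + 2 * 2 ^ m \<in> S} = {}"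
    using assms by auto
  have "ck (Suc m) S = ck m {j \<in> ?R. j \<in> S}"
    unfolding ck.simps Let_def mid high by simp
  also have "\<dots> \<le> ck m S"
    by (rule ck_mono) auto
  finally show ?thesis .
qed

lemma ck_Suc_le_high:
  assumes "S \<subseteq> {3 * 2 ^ m ..}"
  shows "ck (Suc m) S \<le> ck m {j. j + 2 * 2 ^ m \<in> S}"
proof -
  let ?R = "{..< 2 * 2 ^ m - 1} :: nat set"
  have mid: "{j \<in> ?R. j + 2 ^ m \<in> S} = {}" and low: "{j \<in> ?R. j \<in> S} = {}"
    using assms by force+
  have "ck (Suc m) S = ck m {j \<in> ?R. j + 2 * 2 ^ m \<in> S}"
    unfolding ck.simps Let_def mid low by simp
  also have "\<dots> \<le> ck m {j. j + 2 * 2 ^ m \<in> S}"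
    by (rule ck_mono) auto
  finally show ?thesis .
qed

lemma ck_low_le_power: "ck (m + d) {..< 2 ^ m} \<le> 3 ^ m"
proof (induction d)
  case 0
  show ?case using ck_le_K[of m] by (simp add: K_eq_power)
next
  case (Suc d)
  have "{..< 2 ^ m} \<subseteq> {..< (2::nat) ^ (m + d)}"
    by (simp add: power_increasing)
  then have "ck (Suc (m + d)) {..< 2 ^ m} \<le> ck (m + d) {..< 2 ^ m}"
    by (rule ck_Suc_le_low)
  with Suc.IH show ?case by simp
qed

lemma ck_high_le_power:
  "ck (m + d) {2 ^ (m + d + 1) - 2 ^ m ..< 2 ^ (m + d + 1)} \<le> 3 ^ m"
proof (induction d)
  case 0
  show ?case using ck_le_K by (simp add: K_eq_power)
next
  case (Suc d)
  define h :: nat where "h = 2 ^ (m + d)"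
  have "2 ^ m \<le> h"
    unfolding h_def by (simp add: power_increasing)
  have top: "(2::nat) ^ (m + Suc d + 1) = 4 * h" and mid: "(2::nat) ^ (m + d + 1) = 2 * h"
    unfolding h_def by simp_all
  have "{4 * h - 2 ^ m ..< 4 * h} \<subseteq> {3 * 2 ^ (m + d) ..}"
    using \<open>2 ^ m \<le> h\<close> unfolding h_def[symmetric] by auto
  then have "ck (Suc (m + d)) {4 * h - 2 ^ m ..< 4 * h}
      \<le> ck (m + d) {j. j + 2 * 2 ^ (m + d) \<in> {4 * h - 2 ^ m ..< 4 * h}}"
    by (rule ck_Suc_le_high)
  also have "{j. j + 2 * 2 ^ (m + d) \<in> {4 * h - 2 ^ m ..< 4 * h}} = {2 * h - 2 ^ m ..< 2 * h}"
    using \<open>2 ^ m \<le> h\<close> unfolding h_def[symmetric] by auto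
  also have "ck (m + d) \<dots> \<le> 3 ^ m"
    using Suc.IH unfolding mid .
  finally show ?case
    unfolding top by simp
qed

theorem theorem1:
  fixes n l :: nat and S :: "nat set"
  assumes "(2::nat) ^ l < 2 ^ n"
    and "S = {2 ^ (n+1) - 2 ^ (n+1) div 2 ^ l ..< 2 ^ (n+1)}
         \<or> S = {..< 2 ^ (n+1) div 2 ^ l}"
  shows "real (ck n S) \<le> real (K n) / 3 powi (int l - 1)"
proof (cases "l = 0")
  case True
  then show ?thesis using ck_le_K[of n S] by simp
next
  case False
  define m d where "m = n + 1 - l" and "d = l - 1"
  have "l < n" using assms(1) by simp
  then have n: "n = m + d" and l: "int l - 1 = int d"
    using False by (auto simp: m_def d_def)
  have "(2::nat) ^ (n + 1) div 2 ^ l = 2 ^ m"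
    using \<open>l < n\<close> by (simp add: m_def power_diff)
  then have "ck n S \<le> 3 ^ m"
    using assms(2) ck_low_le_power ck_high_le_power by (auto simp: n)
  then have "real (ck n S) \<le> 3 ^ m"
    by (metis of_nat_le_iff of_nat_numeral of_nat_power)
  also have "\<dots> = real (K n) / 3 powi (int l - 1)"
    by (simp add: K_eq_power n l power_add)
  finally show ?thesis .
qed

end
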